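(* Let $-1<r<1$ and $\nu=5$ (sample size $n=6$). The posterior density of the scale-invariant slope under the Cauchy prior, $$p(\tilde\beta\mid y)=\frac{p_C(\tilde\beta)J(\tilde\beta,5,r,1)}{\int_{-\infty}^\infty p_C(x)J(x,5,r,1)\,dx},\qquad p_C(x)=\frac1\pi\frac1{1+x^2},$$ equals $$p(\tilde\beta\mid y)=K(r)\,\frac{1}{1+\tilde\beta^2}\cdot\frac{|\tilde\beta|(\tilde\beta^2-r\tilde\beta+1)}{(\tilde\beta^2-2r\tilde\beta+1)^2},\qquad K(r)={}_2F_1(2,1;\tfrac32;r^2)^{-1}.$$
   Context: Functions: $p_t(t;\nu)$ Student $t$ density; $P_F(x;\nu_1,\nu_2)$ $F$ distribution function; for $\nu>1$, $-1<r<1$, $\tilde\beta>0$: $t_-(\nu,r)=-\sqrt{\nu}\,r/\sqrt{1-r^2}$, $t_+(\tilde\beta,\nu,r)=\sqrt{\nu}(\tilde\beta-r)/\sqrt{1-r^2}$, $F(t,\tilde\beta,\nu,r)=\frac{\nu-1}{\nu+1}\frac{\nu+t^2}{[t_+-t_-]^2-[t-t_-]^2}$, $I(\tilde\beta,\nu,r)=\int_{t_-}^{t_+}p_t(t;\nu)P_F(F(t,\tilde\beta,\nu,r);\nu+1,\nu-1)\,dt$, and for $\beta\ne0$, $l>0$: $J(\beta,\nu,r,l)=I(|\beta|/l,\nu,r\,\mathrm{sign}\beta)+I(l/|\beta|,\nu,r\,\mathrm{sign}\beta)$. ${}_2F_1$ is the Gauss hypergeometric function. *)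

theory Defs
  imports "HOL-Analysis.Analysis"
begin

definition student_t_density :: "real \<Rightarrow> real \<Rightarrow> real" where
  "student_t_density t \<nu> =
     Gamma ((\<nu> + 1) / 2) / (sqrt (\<nu> * pi) * Gamma (\<nu> / 2)) * (1 + t\<^sup>2 / \<nu>) powr (-(\<nu> + 1) / 2)"

definition F_density :: "real \<Rightarrow> real \<Rightarrow> real \<Rightarrow> real" where
  "F_density x d1 d2 =
     (if x \<le> 0 then 0 else
        Gamma ((d1 + d2) / 2) / (Gamma (d1 / 2) * Gamma (d2 / 2)) * (d1 / d2) powr (d1 / 2)
        * x powr (d1 / 2 - 1) * (1 + d1 * x / d2) powr (-(d1 + d2) / 2))"

definition F_cdf :: "real \<Rightarrow> real \<Rightarrow> real \<Rightarrow> real" where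
  "F_cdf x d1 d2 = (LINT u:{..x}|lborel. F_density u d1 d2)"

definition t_minus :: "real \<Rightarrow> real \<Rightarrow> real" where
  "t_minus \<nu> r = - sqrt \<nu> * r / sqrt (1 - r\<^sup>2)"

definition t_plus :: "real \<Rightarrow> real \<Rightarrow> real \<Rightarrow> real" where
  "t_plus \<beta> \<nu> r = sqrt \<nu> * (\<beta> - r) / sqrt (1 - r\<^sup>2)"

definition F_fun :: "real \<Rightarrow> real \<Rightarrow> real \<Rightarrow> real \<Rightarrow> real" where
  "F_fun t \<beta> \<nu> r = (\<nu> - 1) / (\<nu> + 1) * (\<nu> + t\<^sup>2) /
      ((t_plus \<beta> \<nu> r - t_minus \<nu> r)\<^sup>2 - (t - t_minus \<nu> r)\<^sup>2)"

definition I_fun :: "real \<Rightarrow> real \<Rightarrow> real \<Rightarrow> real" where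
  "I_fun \<beta> \<nu> r = (LINT t:{t_minus \<nu> r..t_plus \<beta> \<nu> r}|lborel.
      student_t_density t \<nu> * F_cdf (F_fun t \<beta> \<nu> r) (\<nu> + 1) (\<nu> - 1))"

text \<open>J, defined for beta \<noteq> 0 and l > 0 (its value at beta = 0 is irrelevant: a null set).\<close>
definition J_fun :: "real \<Rightarrow> real \<Rightarrow> real \<Rightarrow> real \<Rightarrow> real" where
  "J_fun \<beta> \<nu> r l = I_fun (\<bar>\<beta>\<bar> / l) \<nu> (r * sgn \<beta>) + I_fun (l / \<bar>\<beta>\<bar>) \<nu> (r * sgn \<beta>)"

definition cauchy_density :: "real \<Rightarrow> real" where
  "cauchy_density x = 1 / pi * (1 / (1 + x\<^sup>2))"

definition hyp2F1 :: "real \<Rightarrow> real \<Rightarrow> real \<Rightarrow> real \<Rightarrow> real" where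
  "hyp2F1 a b c z = (\<Sum>n. pochhammer a n * pochhammer b n / (pochhammer c n * fact n) * z ^ n)"

end

theory Submission
  imports Defs "HOL-Real_Asymp.Real_Asymp"
begin

text \<open>
  For nu = 5 every ingredient of J is elementary, so the numerator and the normalising
  integral of the posterior can both be computed in closed form.
  (1) The F(6,4) distribution function is the rational function F64_cdf.
  (2) After the substitution t = k (w - r), k = sqrt 5 / sqrt (1 - r^2), the integrand of
      I(b,5,r) becomes a rational function of w with the rational antiderivative I5_prim, so
      I(b,5,r) = C(r) * I5_value b r with C(r) = t5_const * sqrt 5 * sqrt (1 - r^2)^5.
  (3) The two I-terms of J combine, I5_value b q + I5_value (1/b) q collapsing to a simple
      rational function; hence J(x,5,r,1) = C(r) * |x| * J_kernel r x, the shape of the theorem.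
  (4) x * J_kernel r x / (1 + x^2) has an elementary (arctan) antiderivative, so the integral of
      |x| * J_kernel r x / (1 + x^2) over the real line is the explicit constant norm_const r.
  (5) 2F1(2,1;3/2;r^2) = norm_const r as well: x * 2F1(2,1;3/2;x^2) solves a first order linear
      ODE whose solution is elementary.
  The theorem follows because the factor C(r)/pi cancels in the posterior quotient.
\<close>

text \<open>Fundamental theorem of calculus on a compact interval, for an integrand that agrees with a
  continuous derivative except possibly at the right endpoint (the integrand of I jumps there).\<close>
lemma integral_Icc_FTC_except_right_endpoint:
  fixes f h G :: "real \<Rightarrow> real"
  assumes ab: "a \<le> b" and fh: "\<And>x. a \<le> x \<Longrightarrow> x < b \<Longrightarrow> f x = h x"
    and G: "\<And>x. a \<le> x \<Longrightarrow> x \<le> b \<Longrightarrow> (G has_real_derivative h x) (at x)"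
    and h: "continuous_on {a..b} h"
  shows "(LINT x:{a..b}|lborel. f x) = G b - G a"
proof -
  have split: "(\<lambda>x. indicator {a..b} x *\<^sub>R f x)
      = (\<lambda>x. indicator {a..b} x *\<^sub>R h x + indicator {b} x * (f b - h b))"
  proof
    fix x
    show "indicator {a..b} x *\<^sub>R f x = indicator {a..b} x *\<^sub>R h x + indicator {b} x * (f b - h b)"
      using ab fh[of x] by (cases "x = b") (auto simp: indicator_def)
  qed
  have int_h: "integrable lborel (\<lambda>x. indicator {a..b} x *\<^sub>R h x)"
    using borel_integrable_atLeastAtMost'[OF h] unfolding set_integrable_def .
  have int_b: "integrable lborel (\<lambda>x. indicator {b} x * (f b - h b))"
    by (intro integrable_mult_left) auto
  have "integral\<^sup>L lborel (\<lambda>x. indicator {a..b} x *\<^sub>R h x) = G b - G a"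
  proof (rule integral_FTC_atLeastAtMost[OF ab _ h])
    fix x assume "a \<le> x" "x \<le> b"
    then show "(G has_vector_derivative h x) (at x within {a..b})"
      unfolding has_real_derivative_iff_has_vector_derivative[symmetric]
      by (blast intro: has_field_derivative_at_within G)
  qed
  moreover have "integral\<^sup>L lborel (\<lambda>x. indicator {b} x * (f b - h b)) = 0"
    by (simp only: integral_mult_left_zero integral_indicator) simp
  ultimately show ?thesis
    unfolding set_lebesgue_integral_def split Bochner_Integration.integral_add[OF int_h int_b] by simp
qed

text \<open>Integral over the real line of |x| g(x), for continuous g \<ge> 0, from an antiderivative A of
  x g(x): A is an antiderivative on the positive and -A on the negative half-line.\<close>
lemma lborel_integral_abs_weight:
  fixes g A :: "real \<Rightarrow> real" and L M :: real
  assumes g_cont: "\<And>x. isCont g x" and g_nonneg: "\<And>x. 0 \<le> g x"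
    and A_deriv: "\<And>x. (A has_real_derivative x * g x) (at x)"
    and A_top: "(A \<longlongrightarrow> L) at_top" and A_bot: "(A \<longlongrightarrow> M) at_bot"
  shows "integrable lborel (\<lambda>x. \<bar>x\<bar> * g x)"
    and "(LINT x|lborel. \<bar>x\<bar> * g x) = L + M - 2 * A 0"
proof -
  define f where "f = (\<lambda>x. \<bar>x\<bar> * g x)"
  have f_cont: "isCont f x" for x unfolding f_def by (intro continuous_intros g_cont)
  have f_nonneg: "AE x in lborel. a < ereal x \<longrightarrow> ereal x < b \<longrightarrow> 0 \<le> f x" for a b
    using g_nonneg by (simp add: f_def)
  have A0: "isCont A 0" using A_deriv by (rule DERIV_isCont)
  have at_0: "((F \<circ> real_of_ereal) \<longlongrightarrow> F 0) (at_left (0::ereal))"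
    "((F \<circ> real_of_ereal) \<longlongrightarrow> F 0) (at_right (0::ereal))" if "isCont F 0" for F :: "real \<Rightarrow> real"
    unfolding zero_ereal_def ereal_tendsto_simps1
    using that unfolding isCont_def by (auto intro: tendsto_within_subset)
  have pos_deriv: "(A has_real_derivative f x) (at x)" if "0 < ereal x" for x
    using A_deriv[of x] that by (simp add: f_def zero_ereal_def)
  have neg_deriv: "((\<lambda>x. - A x) has_real_derivative f x) (at x)" if "ereal x < 0" for x
    using DERIV_minus[OF A_deriv[of x]] that by (simp add: f_def zero_ereal_def)
  have top: "((A \<circ> real_of_ereal) \<longlongrightarrow> L) (at_left \<infinity>)"
    unfolding ereal_tendsto_simps1 using A_top .
  have bot: "(((\<lambda>x. - A x) \<circ> real_of_ereal) \<longlongrightarrow> - M) (at_right (-\<infinity>))"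
    unfolding ereal_tendsto_simps1 using A_bot by (rule tendsto_minus)
  have A0': "isCont (\<lambda>x. - A x) 0" using A0 by (rule continuous_intros)
  note pos = interval_integral_FTC_nonneg[of 0 \<infinity> A f, OF _ pos_deriv f_cont f_nonneg at_0(2)[OF A0] top]
  note neg = interval_integral_FTC_nonneg[of "-\<infinity>" 0 "\<lambda>x. - A x" f,
      OF _ neg_deriv f_cont f_nonneg bot at_0(1)[OF A0']]
  have int_pos: "set_integrable lborel (einterval 0 \<infinity>) f"
    and val_pos: "(LBINT x=0..\<infinity>. f x) = L - A 0"
    using pos by simp_all
  have int_neg: "set_integrable lborel (einterval (-\<infinity>) 0) f"
    and val_neg: "(LBINT x=-\<infinity>..0. f x) = - A 0 - - M"
    using neg by simp_all
  define f_split where "f_split x = indicator (einterval (-\<infinity>) 0) x *\<^sub>R f x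
      + indicator (einterval 0 \<infinity>) x *\<^sub>R f x" for x
  have split: "AE x in lborel. f x = f_split x"
    using AE_lborel_singleton[of 0]
    by eventually_elim (auto simp: f_split_def einterval_iff indicator_def zero_ereal_def)
  have int_split: "integrable lborel f_split"
    using int_neg int_pos unfolding set_integrable_def f_split_def
    by (rule Bochner_Integration.integrable_add)
  have f_meas: "f \<in> borel_measurable lborel"
    using f_cont by (auto intro!: borel_measurable_continuous_onI continuous_at_imp_continuous_on)
  note cong = borel_measurable_integrable[OF int_split] split
  have "integrable lborel f"
    using integrable_cong_AE[OF f_meas cong] int_split by simp
  moreover have "(LINT x|lborel. f x) = (LBINT x=-\<infinity>..0. f x) + (LBINT x=0..\<infinity>. f x)"
    using integral_cong_AE[OF f_meas cong] int_neg int_pos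
    unfolding f_split_def interval_lebesgue_integral_def set_lebesgue_integral_def set_integrable_def
    by (simp add: Bochner_Integration.integral_add)
  ultimately show "integrable lborel (\<lambda>x. \<bar>x\<bar> * g x)" "(LINT x|lborel. \<bar>x\<bar> * g x) = L + M - 2 * A 0"
    using val_pos val_neg unfolding f_def by simp_all
qed

definition F64_cdf :: "real \<Rightarrow> real" where
  "F64_cdf u = 27 * u^3 * (8 + 3*u) / (2 + 3*u)^4"

lemma F_density_6_4: "0 < u \<Longrightarrow> F_density u 6 4 = 1296 * u^2 / (2 + 3*u)^5"
proof -
  assume u: "0 < u"
  have Gammas: "Gamma ((6+4)/2) = (24::real)" "Gamma (6/2) = (2::real)" "Gamma (4/2) = (1::real)"
    by (simp_all add: Gamma_numeral fact_numeral)
  have p1: "((6::real)/4) powr (6/2) = 27/8" by (simp add: power_divide)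
  have p2: "u powr (6/2-1) = u^2" using u by (simp add: powr_numeral)
  have p3: "(1 + 6*u/4) powr (-(6+4)/2) = 32/(2+3*u)^5"
    using u by (simp add: powr_minus powr_numeral divide_simps)
  show ?thesis using u unfolding F_density_def
    by (simp only: Gammas p1 p2 p3 if_False not_le) simp
qed

lemma F64_cdf_deriv:
  "-2/3 < u \<Longrightarrow> (F64_cdf has_real_derivative 1296 * u^2 / (2 + 3*u)^5) (at u)"
  unfolding F64_cdf_def
  by (rule derivative_eq_intros refl | simp)+ (simp add: field_simps; algebra)

lemma F_cdf_6_4: assumes x: "0 < x" shows "F_cdf x 6 4 = F64_cdf x"
proof -
  define f where "f u = 1296 * u^2 / (2 + 3*u)^5" for u :: real
  have "indicator {..x} u *\<^sub>R F_density u 6 4 = indicator {0..x} u *\<^sub>R f u" for u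
  proof (cases "0 < u")
    case True then show ?thesis by (simp add: F_density_6_4 f_def indicator_def)
  next
    case False then show ?thesis by (auto simp: f_def F_density_def indicator_def)
  qed
  then have "(\<lambda>u. indicator {..x} u *\<^sub>R F_density u 6 4) = (\<lambda>u. indicator {0..x} u *\<^sub>R f u)"
    by simp
  moreover have "integral\<^sup>L lborel (\<lambda>u. indicator {0..x} u *\<^sub>R f u) = F64_cdf x - F64_cdf 0"
  proof (rule integral_FTC_atLeastAtMost)
    fix u assume "0 \<le> u" "u \<le> x"
    then have "(F64_cdf has_real_derivative f u) (at u)"
      unfolding f_def by (intro F64_cdf_deriv) simp
    then show "(F64_cdf has_vector_derivative f u) (at u within {0..x})"
      unfolding has_real_derivative_iff_has_vector_derivative[symmetric]
      by (rule has_field_derivative_at_within)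
  next
    show "continuous_on {0..x} f" unfolding f_def
      by (intro continuous_intros) (auto simp: add_nonneg_eq_0_iff)
  qed (use x in simp)
  ultimately show ?thesis unfolding F_cdf_def set_lebesgue_integral_def by (simp add: F64_cdf_def)
qed

definition t5_const :: real where
  "t5_const = Gamma 3 / (sqrt (5 * pi) * Gamma (5/2))"

lemma t5_const_pos: "0 < t5_const"
  unfolding t5_const_def by (intro divide_pos_pos mult_pos_pos) auto

lemma student_t_density_5: "student_t_density t 5 = t5_const * (1 + t^2/5) powr (-3)"
  unfolding student_t_density_def t5_const_def by simp

lemma quadratic_pos:
  fixes r x :: real assumes "-1 < r" "r < 1" shows "0 < x^2 - 2*r*x + 1"
proof -
  have "r^2 < 1" using assms by (simp add: abs_less_iff power2_less_1_iff)
  moreover have "x^2 - 2*r*x + 1 = (x - r)^2 + (1 - r^2)"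
    by (simp add: power2_eq_square algebra_simps)
  ultimately show ?thesis by (smt (verit) zero_le_power2)
qed

text \<open>Step (2). With t = k (w - r) the integration range [t_minus, t_plus] of I(b,5,r) becomes
  w \<in> [0, b]; the denominator 1 + b^2 - 2 r w stays positive there.\<close>
lemma I5_denominator_pos:
  fixes r b w :: real assumes r: "-1 < r" "r < 1" and w: "0 \<le> w" "w \<le> b"
  shows "0 < 1 + b^2 - 2*r*w"
proof -
  have "w^2 \<le> b^2" using w by (intro power_mono) auto
  with quadratic_pos[OF r, of w] show ?thesis by linarith
qed

text \<open>In the variable w the integrand of I(b,5,r) is rational: the F(6,4) distribution function
  evaluated at F_fun = (2/3) E/D, E = 1 + w^2 - 2 r w, D = b^2 - w^2, is
  E^3 (4 (D + E) - 3 E) / (D + E)^4, and its factor E^3 cancels the Student t density.\<close>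
lemma I5_integrand:
  fixes r b w :: real
  assumes r: "-1 < r" "r < 1" and w: "0 \<le> w" "w < b"
  defines "s \<equiv> sqrt (1 - r^2)" and "k \<equiv> sqrt 5 / sqrt (1 - r^2)"
  shows "student_t_density (k*(w-r)) 5 * F_cdf (F_fun (k*(w-r)) b 5 r) 6 4
         = t5_const * s^6 * (1 + 4*b^2 - 2*r*w - 3*w^2) / (1 + b^2 - 2*r*w)^4"
proof -
  have "r^2 < 1" using r by (simp add: abs_less_iff power2_less_1_iff)
  hence s2: "s^2 = 1 - r^2" and s0: "0 < s" unfolding s_def by auto
  have k: "k = sqrt 5 / s" unfolding k_def s_def ..
  have k2: "k^2 * s^2 = 5" using s0 unfolding k by (simp add: power_divide)
  have k0: "0 < k" using s0 unfolding k by simp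
  define E where "E = 1 + w^2 - 2*r*w"
  define D where "D = b^2 - w^2"
  have E0: "0 < E" unfolding E_def using quadratic_pos[OF r, of w] by simp
  have D0: "0 < D" unfolding D_def using w by (simp add: power_strict_mono)
  have E_alt: "E = (w - r)^2 + s^2" unfolding E_def s2 by (simp add: power2_eq_square algebra_simps)
  have t_num: "5 + (k*(w-r))^2 = k^2 * E"
    unfolding E_alt distrib_left k2 by (simp add: power_mult_distrib)
  have F_val: "F_fun (k*(w-r)) b 5 r = 2/3 * E / D"
  proof -
    have "t_minus 5 r = - (k*r)" "t_plus b 5 r = k*(b-r)"
      unfolding t_minus_def t_plus_def k_def by simp_all
    moreover have "(k*(b-r) - - (k*r))^2 - (k*(w-r) - - (k*r))^2 = k^2 * D"
      unfolding D_def by (simp add: algebra_simps power2_eq_square)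
    ultimately show ?thesis unfolding F_fun_def t_num using k0 D0 by (simp add: field_simps)
  qed
  have t_val: "student_t_density (k*(w-r)) 5 = t5_const * s^6 / E^3"
  proof -
    have "1 + (k*(w-r))^2/5 = E / s^2"
      using t_num k2 s0 by (simp add: field_simps)
    moreover have "(E / s^2) powr (-3) = s^6 / E^3"
      using E0 s0 by (simp add: powr_minus field_simps power_divide flip: power_mult)
    ultimately show ?thesis unfolding student_t_density_5 by simp
  qed
  have cdf_val: "F64_cdf (2/3 * E / D) / E^3 = (4*(D+E) - 3*E) / (D+E)^4"
    using E0 D0 unfolding F64_cdf_def by (simp add: field_simps) algebra
  have "D + E = 1 + b^2 - 2*r*w" "4*(D+E) - 3*E = 1 + 4*b^2 - 2*r*w - 3*w^2"
    unfolding D_def E_def by simp_all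
  moreover have "student_t_density (k*(w-r)) 5 * F_cdf (F_fun (k*(w-r)) b 5 r) 6 4
      = t5_const * s^6 * (F64_cdf (2/3 * E / D) / E^3)"
    using F_cdf_6_4[of "2/3 * E / D"] E0 D0 unfolding t_val F_val by simp
  ultimately show ?thesis unfolding cdf_val by simp
qed

definition I5_prim :: "real \<Rightarrow> real \<Rightarrow> real \<Rightarrow> real" where
  "I5_prim b r w =
     ((1+b^2)^2*(1+4*b^2)*w - 3*r*(1+b^2)*(1+3*b^2)*w^2 + (2*r^2*(1+3*b^2) - (1+b^2)^2)*w^3)
     / (1 + b^2 - 2*r*w)^3 / (1+b^2)^3"

lemma I5_prim_deriv:
  fixes r b w :: real assumes N: "1 + b^2 - 2*r*w \<noteq> 0"
  shows "(I5_prim b r has_real_derivative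
           (1 + 4*b^2 - 2*r*w - 3*w^2) / (1 + b^2 - 2*r*w)^4) (at w)"
proof -
  have "((\<lambda>w. ((1+b^2)^2*(1+4*b^2)*w - 3*r*(1+b^2)*(1+3*b^2)*w^2
          + (2*r^2*(1+3*b^2) - (1+b^2)^2)*w^3) / (1 + b^2 - 2*r*w)^3)
        has_real_derivative (1+b^2)^3 * (1 + 4*b^2 - 2*r*w - 3*w^2) / (1 + b^2 - 2*r*w)^4) (at w)"
    apply (rule derivative_eq_intros refl)+
    using N apply simp
    using N by (simp add: field_simps) algebra
  moreover have "1 + b^2 \<noteq> (0::real)" by (smt (verit) zero_le_power2)
  ultimately show ?thesis unfolding I5_prim_def
    by (auto dest: DERIV_cdivide[where c = "(1+b^2)^3"])
qed

definition I5_value :: "real \<Rightarrow> real \<Rightarrow> real" where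
  "I5_value b r = b*(1+3*b^2)*(1+b^2-r*b) / ((1+b^2)^3*(1+b^2-2*r*b)^2)"

lemma I5_prim_endpoints:
  fixes r b :: real assumes N: "1 + b^2 - 2*r*b \<noteq> 0"
  shows "I5_prim b r 0 = 0" and "I5_prim b r b = I5_value b r"
proof -
  have "1 + b^2 \<noteq> (0::real)" by (smt (verit) zero_le_power2)
  with N show "I5_prim b r b = I5_value b r"
    unfolding I5_prim_def I5_value_def by (simp add: field_simps) algebra
qed (simp add: I5_prim_def)

lemma I_fun_5:
  fixes r b :: real assumes r: "-1 < r" "r < 1" and b: "0 \<le> b"
  shows "I_fun b 5 r = t5_const * sqrt 5 * sqrt (1 - r^2)^5 * I5_value b r"
proof -
  define s where "s = sqrt (1 - r^2)"
  define k where "k = sqrt 5 / sqrt (1 - r^2)"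
  have "r^2 < 1" using r by (simp add: abs_less_iff power2_less_1_iff)
  hence s0: "0 < s" unfolding s_def by simp
  have k0: "0 < k" and ks: "k * s^6 = sqrt 5 * s^5"
    using s0 unfolding k_def s_def[symmetric] by (simp_all add: field_simps eval_nat_numeral)
  define W where "W t = t / k + r" for t
  define h where "h t = t5_const * s^6 * (1 + 4*b^2 - 2*r*W t - 3*(W t)^2) / (1 + b^2 - 2*r*W t)^4" for t
  define G where "G t = t5_const * k * s^6 * I5_prim b r (W t)" for t
  have W_range: "0 \<le> W t" "W t \<le> b" if "- (k*r) \<le> t" "t \<le> k*(b-r)" for t
    using that k0 unfolding W_def by (simp_all add: field_simps)
  have N_pos: "0 < 1 + b^2 - 2*r*W t" if "- (k*r) \<le> t" "t \<le> k*(b-r)" for t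
    using I5_denominator_pos[OF r W_range[OF that]] .
  have "I_fun b 5 r = (LINT t:{- (k*r)..k*(b-r)}|lborel.
      student_t_density t 5 * F_cdf (F_fun t b 5 r) 6 4)"
    unfolding I_fun_def t_minus_def t_plus_def k_def by simp
  also have "\<dots> = G (k*(b-r)) - G (- (k*r))"
  proof (rule integral_Icc_FTC_except_right_endpoint)
    show "- (k*r) \<le> k*(b-r)" using k0 b by (simp add: algebra_simps)
  next
    fix t assume t: "- (k*r) \<le> t" "t < k*(b-r)"
    have "t = k*(W t - r)" "0 \<le> W t" "W t < b"
      using t k0 unfolding W_def by (simp_all add: field_simps)
    then show "student_t_density t 5 * F_cdf (F_fun t b 5 r) 6 4 = h t"
      using I5_integrand[OF r, of "W t" b] unfolding h_def s_def k_def by simp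
  next
    fix t assume t: "- (k*r) \<le> t" "t \<le> k*(b-r)"
    have "(W has_real_derivative 1/k) (at t)" unfolding W_def
      using k0 by (auto intro!: derivative_eq_intros)
    from DERIV_chain2[OF I5_prim_deriv this] N_pos[OF t]
    have "((\<lambda>t. I5_prim b r (W t)) has_real_derivative
        (1 + 4*b^2 - 2*r*W t - 3*(W t)^2) / (1 + b^2 - 2*r*W t)^4 * (1/k)) (at t)"
      by simp
    then have "(G has_real_derivative t5_const * k * s^6 *
        ((1 + 4*b^2 - 2*r*W t - 3*(W t)^2) / (1 + b^2 - 2*r*W t)^4 * (1/k))) (at t)"
      unfolding G_def by (rule DERIV_cmult)
    moreover have "t5_const * k * s^6 *
        ((1 + 4*b^2 - 2*r*W t - 3*(W t)^2) / (1 + b^2 - 2*r*W t)^4 * (1/k)) = h t"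
      unfolding h_def using k0 by simp
    ultimately show "(G has_real_derivative h t) (at t)" by simp
  next
    have "(1 + b^2 - 2*r*(t/k + r))^4 \<noteq> 0" if "t \<in> {- (k*r)..k*(b-r)}" for t
      using N_pos[of t] that unfolding W_def by auto
    then show "continuous_on {- (k*r)..k*(b-r)} h" unfolding h_def W_def
      by (intro continuous_intros ballI) (use k0 in auto)
  qed
  also have "\<dots> = t5_const * k * s^6 * I5_value b r"
  proof -
    have "W (k*(b-r)) = b" "W (- (k*r)) = 0" using k0 by (simp_all add: W_def)
    moreover have "1 + b^2 - 2*r*b \<noteq> 0" using I5_denominator_pos[OF r b order_refl] by simp
    ultimately show ?thesis unfolding G_def using I5_prim_endpoints[of b r] by simp
  qed
  also have "\<dots> = t5_const * sqrt 5 * s^5 * I5_value b r" using ks by simp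
  finally show ?thesis unfolding s_def .
qed

definition J_kernel :: "real \<Rightarrow> real \<Rightarrow> real" where
  "J_kernel r x = (x^2 - r*x + 1) / (x^2 - 2*r*x + 1)^2"

text \<open>The inversion b \<mapsto> 1/b in J: the two I-values add up to a much simpler rational function,
  because b (1 + 3 b^2) + b^5 (b^2 + 3) = b (1 + b^2)^3.\<close>
lemma I5_value_reciprocal_sum:
  fixes b q :: real assumes b: "0 < b" and q: "-1 < q" "q < 1"
  shows "I5_value b q + I5_value (1/b) q = b * (1+b^2-q*b) / (1+b^2-2*q*b)^2"
proof -
  define N where "N = 1+b^2-2*q*b"
  have N: "0 < N" unfolding N_def using I5_denominator_pos[OF q, of b b] b by simp
  have P: "0 < 1 + b^2" by (smt (verit) zero_le_power2)
  have "I5_value (1/b) q = b^5*(b^2+3)*(1+b^2-q*b) / ((1+b^2)^3*N^2)"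
  proof -
    have "1 + (1/b)^2 = (1+b^2)/b^2" "1 + (1/b)^2 - 2*q*(1/b) = N/b^2"
      "1 + (1/b)^2 - q*(1/b) = (1+b^2-q*b)/b^2" "1 + 3*(1/b)^2 = (b^2+3)/b^2"
      unfolding N_def using b by (simp_all add: field_simps power2_eq_square)
    then have "I5_value (1/b) q
        = (1/b) * ((b^2+3)/b^2) * ((1+b^2-q*b)/b^2) / (((1+b^2)/b^2)^3 * (N/b^2)^2)"
      unfolding I5_value_def by (simp only: add.assoc[symmetric] diff_add_eq)
    also have "\<dots> = b^5*(b^2+3)*(1+b^2-q*b) / ((1+b^2)^3*N^2)"
      using b P N by (simp add: field_simps) algebra
    finally show ?thesis .
  qed
  moreover have "I5_value b q = b*(1+3*b^2)*(1+b^2-q*b) / ((1+b^2)^3*N^2)"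
    unfolding I5_value_def N_def ..
  moreover have "b*(1+3*b^2) + b^5*(b^2+3) = b*(1+b^2)^3" by algebra
  ultimately have "I5_value b q + I5_value (1/b) q = b*(1+b^2)^3*(1+b^2-q*b) / ((1+b^2)^3*N^2)"
    by (simp add: add_divide_distrib[symmetric] distrib_right[symmetric])
  also have "\<dots> = b*(1+b^2-q*b) / N^2" using P by simp
  finally show ?thesis unfolding N_def .
qed

lemma J_fun_5:
  fixes r x :: real assumes r: "-1 < r" "r < 1"
  shows "J_fun x 5 r 1 = t5_const * sqrt 5 * sqrt (1 - r^2)^5 * (\<bar>x\<bar> * J_kernel r x)"
proof (cases "x = 0")
  case True
  then show ?thesis using I_fun_5[of 0 0] by (simp add: J_fun_def I5_value_def)
next
  case False
  define q where "q = r * sgn x"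
  define b where "b = \<bar>x\<bar>"
  have b: "0 < b" using False unfolding b_def by simp
  have q: "-1 < q" "q < 1" unfolding q_def using r False by (auto simp: sgn_if)
  have q2: "q^2 = r^2" unfolding q_def using False by (simp add: power_mult_distrib sgn_if)
  have qb: "q * b = r * x" unfolding q_def b_def by (simp add: sgn_mult_abs mult.assoc)
  have "J_fun x 5 r 1 = I_fun b 5 q + I_fun (1/b) 5 q"
    unfolding J_fun_def q_def b_def by simp
  also have "\<dots> = t5_const * sqrt 5 * sqrt (1 - q^2)^5 * (I5_value b q + I5_value (1/b) q)"
    using I_fun_5[OF q, of b] I_fun_5[OF q, of "1/b"] b by (simp add: distrib_left)
  also have "I5_value b q + I5_value (1/b) q = \<bar>x\<bar> * J_kernel r x"
  proof -
    have rewrite: "1+b^2-q*b = x^2-r*x+1" "1+b^2-2*q*b = x^2-2*r*x+1"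
      using qb unfolding b_def by (simp_all add: mult.assoc)
    show ?thesis unfolding I5_value_reciprocal_sum[OF b q] rewrite by (simp add: J_kernel_def b_def)
  qed
  finally show ?thesis unfolding q2 .
qed

lemma J_kernel_pos:
  fixes r x :: real assumes r: "-1 < r" "r < 1" shows "0 < J_kernel r x"
proof -
  have "x^2 - r*x + 1 = ((x^2 - 2*r*x + 1) + (x^2 + 1)) / 2" by (simp add: field_simps)
  moreover have "0 < x^2 - 2*r*x + 1" "0 < x^2 + 1" using quadratic_pos[OF r] by (auto intro: add_nonneg_pos)
  ultimately show ?thesis unfolding J_kernel_def by simp
qed

lemma posterior_kernel_cont:
  fixes r x :: real assumes r: "-1 < r" "r < 1" shows "isCont (\<lambda>x. J_kernel r x / (1 + x^2)) x"
proof -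
  have "(x^2 - 2*r*x + 1)^2 \<noteq> 0" "1 + x^2 \<noteq> 0"
    using quadratic_pos[OF r, of x] by (auto simp: add_nonneg_eq_0_iff)
  then show ?thesis unfolding J_kernel_def by (intro continuous_intros)
qed

definition norm_const :: "real \<Rightarrow> real" where
  "norm_const r =
     (if r = 0 then 1 else 1 / (2 * (1 - r^2)) + arcsin r / (2 * r * sqrt (1 - r^2)^3))"

text \<open>For r \<noteq> 0, with s = sqrt (1 - r^2), partial fractions give this antiderivative of
  x J_kernel r x / (1 + x^2).\<close>
definition post_prim :: "real \<Rightarrow> real \<Rightarrow> real \<Rightarrow> real" where
  "post_prim r s x = 1/(4*r* s) * arctan ((x-r)/s) - 1/(4*r) * arctan x - 1/(4*(x^2-2*r*x+1))
     + r/(4* s^2) * ((x-r)/(x^2-2*r*x+1)) + r/(4* s^3) * arctan ((x-r)/s)"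

lemma post_prim_deriv:
  fixes r s x :: real
  assumes r: "-1 < r" "r < 1" "r \<noteq> 0" and s: "0 < s" "s^2 = 1 - r^2"
  shows "(post_prim r s has_real_derivative x * (J_kernel r x / (1 + x^2))) (at x)"
proof -
  define Q where "Q = x^2-2*r*x+1"
  define P where "P = 1 + x^2"
  have Q0: "0 < Q" unfolding Q_def using quadratic_pos[OF r(1,2)] .
  have P0: "0 < P" unfolding P_def by (smt (verit) zero_le_power2)
  have d1: "((\<lambda>x. arctan ((x-r)/s)) has_real_derivative s/Q) (at x)"
  proof -
    have "((\<lambda>x. arctan ((x-r)/s)) has_real_derivative inverse (1 + ((x-r)/s)^2) * (1/s)) (at x)"
      using s by (auto intro!: derivative_eq_intros)
    moreover have "Q = s^2 + (x-r)^2" unfolding Q_def s(2) by (simp add: power2_eq_square algebra_simps)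
    then have "inverse (1 + ((x-r)/s)^2) * (1/s) = s/Q"
      using s Q0 by (simp add: field_simps power2_eq_square)
    ultimately show ?thesis by simp
  qed
  have d2: "(arctan has_real_derivative 1/P) (at x)"
    using DERIV_arctan[of x] by (simp add: P_def divide_inverse)
  have d3: "((\<lambda>x. 1/(4*(x^2-2*r*x+1))) has_real_derivative - (4*(2*x-2*r))/(4*Q)^2) (at x)"
    using Q0 unfolding Q_def by (auto intro!: derivative_eq_intros simp: power2_eq_square algebra_simps)
  have d4: "((\<lambda>x. (x-r)/(x^2-2*r*x+1)) has_real_derivative (Q - (x-r)*(2*x-2*r))/Q^2) (at x)"
    using Q0 unfolding Q_def by (auto intro!: derivative_eq_intros simp: power2_eq_square algebra_simps)
  have "(post_prim r s has_real_derivative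
      1/(4*r* s) * (s/Q) - 1/(4*r) * (1/P) - (- (4*(2*x-2*r))/(4*Q)^2)
       + r/(4* s^2) * ((Q - (x-r)*(2*x-2*r))/Q^2) + r/(4* s^3) * (s/Q)) (at x)"
    unfolding post_prim_def by (intro DERIV_add DERIV_diff DERIV_cmult d1 d2 d3 d4)
  moreover have "1/(4*r* s) * (s/Q) - 1/(4*r) * (1/P) - (- (4*(2*x-2*r))/(4*Q)^2)
       + r/(4* s^2) * ((Q - (x-r)*(2*x-2*r))/Q^2) + r/(4* s^3) * (s/Q)
     = x * ((x^2-r*x+1) / Q^2 / P)"
    using Q0 P0 s r apply (simp add: field_simps)
    using Q_def P_def s(2) by algebra
  ultimately show ?thesis unfolding J_kernel_def Q_def P_def by simp
qed

text \<open>The arctan terms have opposite limits at the two ends; the rational terms vanish.\<close>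
lemma post_prim_limits:
  fixes r s :: real assumes s: "0 < s"
  defines "L \<equiv> (1/(4*r* s) - 1/(4*r) + r/(4* s^3)) * (pi/2)"
  shows "(post_prim r s \<longlongrightarrow> L) at_top" and "(post_prim r s \<longlongrightarrow> - L) at_bot"
proof -
  have lin_top: "filterlim (\<lambda>x::real. (x-r)/s) at_top at_top"
    and lin_bot: "filterlim (\<lambda>x::real. (x-r)/s) at_bot at_bot" using s by real_asymp+
  have rat_top: "((\<lambda>x::real. 1/(4*(x^2-2*r*x+1))) \<longlongrightarrow> 0) at_top"
    "((\<lambda>x::real. (x-r)/(x^2-2*r*x+1)) \<longlongrightarrow> 0) at_top" by real_asymp+
  have rat_bot: "((\<lambda>x::real. 1/(4*(x^2-2*r*x+1))) \<longlongrightarrow> 0) at_bot"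
    "((\<lambda>x::real. (x-r)/(x^2-2*r*x+1)) \<longlongrightarrow> 0) at_bot" by real_asymp+
  have "(post_prim r s \<longlongrightarrow> 1/(4*r* s) * (pi/2) - 1/(4*r) * (pi/2) - 0 + r/(4* s^2) * 0
      + r/(4* s^3) * (pi/2)) at_top"
    unfolding post_prim_def
    by (intro tendsto_intros filterlim_compose[OF tendsto_arctan_at_top lin_top]
        tendsto_arctan_at_top rat_top)
  then show "(post_prim r s \<longlongrightarrow> L) at_top" by (simp add: L_def algebra_simps)
  have "(post_prim r s \<longlongrightarrow> 1/(4*r* s) * - (pi/2) - 1/(4*r) * - (pi/2) - 0 + r/(4* s^2) * 0
      + r/(4* s^3) * - (pi/2)) at_bot"
    unfolding post_prim_def
    by (intro tendsto_intros filterlim_compose[OF tendsto_arctan_at_bot lin_bot]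
        tendsto_arctan_at_bot rat_bot)
  then show "(post_prim r s \<longlongrightarrow> - L) at_bot" by (simp add: L_def algebra_simps)
qed

lemma integral_posterior_kernel:
  fixes r :: real assumes r: "-1 < r" "r < 1"
  shows "integrable lborel (\<lambda>x. \<bar>x\<bar> * (J_kernel r x / (1 + x^2)))"
    and "(LINT x|lborel. \<bar>x\<bar> * (J_kernel r x / (1 + x^2))) = norm_const r"
proof -
  have cont: "\<And>x. isCont (\<lambda>x. J_kernel r x / (1 + x^2)) x"
    using posterior_kernel_cont[OF r] .
  have nonneg: "\<And>x. 0 \<le> J_kernel r x / (1 + x^2)"
    using J_kernel_pos[OF r] by (simp add: less_imp_le add_pos_nonneg)
  have "integrable lborel (\<lambda>x. \<bar>x\<bar> * (J_kernel r x / (1 + x^2)))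
    \<and> (LINT x|lborel. \<bar>x\<bar> * (J_kernel r x / (1 + x^2))) = norm_const r"
  proof (cases "r = 0")
    case True
    define A where "A x = - 1 / (2 * (1 + x^2))" for x :: real
    have deriv: "(A has_real_derivative x * (J_kernel r x / (1 + x^2))) (at x)" for x
    proof -
      have P: "1 + x^2 \<noteq> 0" by (smt (verit) zero_le_power2)
      have "(A has_real_derivative - (- 1 * (2*(2*x)) / (2*(1+x^2))^2)) (at x)"
        unfolding A_def using P by (auto intro!: derivative_eq_intros simp: power2_eq_square)
      moreover have "J_kernel r x = 1 / (1 + x^2)"
        using P unfolding J_kernel_def True by (simp add: power2_eq_square add.commute)
      moreover have "(2*(1+x^2))^2 = 4*(1+x^2)^2" by (simp only: power_mult_distrib) simp
      ultimately show ?thesis by (simp add: power2_eq_square)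
    qed
    have "(A \<longlongrightarrow> 0) at_top" "(A \<longlongrightarrow> 0) at_bot" unfolding A_def by real_asymp+
    from lborel_integral_abs_weight[OF cont nonneg deriv this]
    show ?thesis by (simp add: A_def norm_const_def True)
  next
    case False
    define s where "s = sqrt (1 - r^2)"
    have "r^2 < 1" using r by (simp add: abs_less_iff power2_less_1_iff)
    hence s0: "0 < s" and s2: "s^2 = 1 - r^2" unfolding s_def by auto
    note integral = lborel_integral_abs_weight[OF cont nonneg post_prim_deriv[OF r False s0 s2]
        post_prim_limits[OF s0]]
    have "arctan (r/s) = arcsin r" unfolding s_def using r by (simp add: arcsin_arctan)
    then have prim0: "post_prim r s 0
        = - arcsin r/(4*r* s) - 1/4 - r^2/(4* s^2) - r*arcsin r/(4* s^3)"
      unfolding post_prim_def by (simp add: arctan_minus power2_eq_square)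
    have "norm_const r = 1/(2* s^2) + arcsin r/(2*r* s^3)"
      unfolding norm_const_def s2[symmetric] s_def[symmetric] using False s0 by simp
    then have "- 2 * post_prim r s 0 = norm_const r"
      unfolding prim0 using False s0 apply (simp add: field_simps)
      using s2 by algebra
    with integral show ?thesis by simp
  qed
  then show "integrable lborel (\<lambda>x. \<bar>x\<bar> * (J_kernel r x / (1 + x^2)))"
    and "(LINT x|lborel. \<bar>x\<bar> * (J_kernel r x / (1 + x^2))) = norm_const r" by simp_all
qed

text \<open>Step (5). The coefficients of 2F1(2,1;3/2;z) satisfy c_0 = 1 and
  c_(n+1) (2n+3) = c_n (2n+4); in particular 0 < c_n \<le> n + 1, so the series has radius \<ge> 1.\<close>
definition hyp_coeff :: "nat \<Rightarrow> real" where
  "hyp_coeff n = pochhammer 2 n * pochhammer 1 n / (pochhammer (3/2) n * fact n)"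

lemma hyp_coeff_0: "hyp_coeff 0 = 1"
  unfolding hyp_coeff_def by simp

lemma hyp_coeff_eq: "hyp_coeff n = pochhammer 2 n / pochhammer (3/2) n"
  unfolding hyp_coeff_def pochhammer_fact[symmetric] by simp

lemma hyp_coeff_pos: "0 < hyp_coeff n"
  unfolding hyp_coeff_eq by (intro divide_pos_pos pochhammer_pos) auto

lemma hyp_coeff_Suc: "hyp_coeff (Suc n) * (2*n+3) = hyp_coeff n * (2*n+4)"
proof -
  have "0 < pochhammer (3/2::real) n" by (rule pochhammer_pos) simp
  then have "hyp_coeff (Suc n) = hyp_coeff n * (2 + n) / (3/2 + n)"
    unfolding hyp_coeff_eq pochhammer_Suc by (simp add: field_simps)
  then show ?thesis by (simp add: field_simps)
qed

lemma hyp_coeff_le: "hyp_coeff n \<le> real n + 1"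
proof (induction n)
  case 0 then show ?case by (simp add: hyp_coeff_0)
next
  case (Suc n)
  have "hyp_coeff (Suc n) = hyp_coeff n * (2*real n+4) / (2*real n+3)"
    using hyp_coeff_Suc[of n] by (simp add: field_simps)
  also have "\<dots> \<le> (real n+1) * (2*real n+4) / (2*real n+3)"
    using Suc by (intro divide_right_mono mult_right_mono) auto
  also have "\<dots> \<le> real (Suc n) + 1" by (simp add: field_simps)
  finally show ?case .
qed

definition odd_coeff :: "nat \<Rightarrow> real" where
  "odd_coeff m = (if odd m then hyp_coeff (m div 2) else 0)"

lemma summable_odd_coeff:
  fixes x :: real assumes x: "\<bar>x\<bar> < 1" shows "summable (\<lambda>m. odd_coeff m * x^m)"
proof (rule summable_comparison_test)
  have "summable (\<lambda>m. diffs (\<lambda>_. 1::real) m * \<bar>x\<bar>^m)"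
    by (rule termdiff_converges[where K = 1]) (use x in \<open>auto intro!: summable_geometric\<close>)
  then show "summable (\<lambda>m. real (Suc m) * \<bar>x\<bar>^m)" unfolding diffs_def by simp
  have "\<bar>odd_coeff m\<bar> \<le> real (Suc m)" for m
    using hyp_coeff_le[of "m div 2"] hyp_coeff_pos[of "m div 2"] unfolding odd_coeff_def
    by (auto simp: of_nat_div)
  then show "\<exists>N. \<forall>m\<ge>N. norm (odd_coeff m * x^m) \<le> real (Suc m) * \<bar>x\<bar>^m"
    by (auto simp: abs_mult power_abs mult_right_mono)
qed

definition hyp_odd :: "real \<Rightarrow> real" where
  "hyp_odd x = (\<Sum>m. odd_coeff m * x^m)"

definition hyp_odd' :: "real \<Rightarrow> real" where
  "hyp_odd' x = (\<Sum>m. diffs odd_coeff m * x^m)"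

lemma hyp_odd_sums:
  fixes x :: real assumes "\<bar>x\<bar> < 1"
  shows "(\<lambda>n. hyp_coeff n * x^(2*n+1)) sums hyp_odd x"
proof -
  have "(\<lambda>m. odd_coeff m * x^m) sums hyp_odd x"
    unfolding hyp_odd_def using summable_odd_coeff[OF assms] by (rule summable_sums)
  moreover have "odd_coeff m * x^m = 0" if "m \<notin> range (\<lambda>n. 2*n+1)" for m
    using that unfolding odd_coeff_def by (auto elim: oddE)
  moreover have "strict_mono (\<lambda>n::nat. 2*n+1)" by (rule strict_monoI) simp
  ultimately have "(\<lambda>n. odd_coeff (2*n+1) * x^(2*n+1)) sums hyp_odd x"
    using sums_mono_reindex[of "\<lambda>n. 2*n+1" "\<lambda>m. odd_coeff m * x^m"] by blast
  then show ?thesis by (simp add: odd_coeff_def)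
qed

lemma hyp_odd'_sums:
  fixes x :: real assumes "\<bar>x\<bar> < 1"
  shows "(\<lambda>n. (2*real n+1) * hyp_coeff n * x^(2*n)) sums hyp_odd' x"
proof -
  have "summable (\<lambda>m. diffs odd_coeff m * x^m)"
    by (rule termdiff_converges[where K = 1]) (use assms summable_odd_coeff in auto)
  then have "(\<lambda>m. diffs odd_coeff m * x^m) sums hyp_odd' x"
    unfolding hyp_odd'_def by (rule summable_sums)
  moreover have "diffs odd_coeff m * x^m = 0" if "m \<notin> range (\<lambda>n. 2*n)" for m
    using that unfolding odd_coeff_def diffs_def by (auto elim: evenE)
  moreover have "strict_mono (\<lambda>n::nat. 2*n)" by (rule strict_monoI) simp
  ultimately have "(\<lambda>n. diffs odd_coeff (2*n) * x^(2*n)) sums hyp_odd' x"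
    using sums_mono_reindex[of "\<lambda>n. 2*n" "\<lambda>m. diffs odd_coeff m * x^m"] by blast
  then show ?thesis by (simp add: odd_coeff_def diffs_def add.commute)
qed

lemma hyp_odd_deriv:
  fixes x :: real assumes "\<bar>x\<bar> < 1" shows "(hyp_odd has_real_derivative hyp_odd' x) (at x)"
  unfolding hyp_odd_def hyp_odd'_def
  by (rule termdiffs_strong'[where K = 1]) (use assms summable_odd_coeff in auto)

text \<open>The recurrence of the coefficients becomes the ODE u' = 1 + x^2 u' + 3 x u.\<close>
lemma hyp_odd_ode:
  fixes x :: real assumes x: "\<bar>x\<bar> < 1"
  shows "hyp_odd' x = 1 + x^2 * hyp_odd' x + 3 * x * hyp_odd x"
proof -
  define S where "S n = (2*real n+1) * hyp_coeff n * x^(2*n)" for n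
  have "S sums hyp_odd' x" unfolding S_def using hyp_odd'_sums[OF x] .
  then have "(\<lambda>n. S (Suc n)) sums (hyp_odd' x - 1)"
    using sums_Suc_iff[of S "hyp_odd' x - 1"] by (simp add: S_def hyp_coeff_0)
  moreover have "S (Suc n) = x^2 * ((2*real n+1) * hyp_coeff n * x^(2*n))
      + 3*x * (hyp_coeff n * x^(2*n+1))" for n
  proof -
    have "S (Suc n) = (hyp_coeff (Suc n) * (2*n+3)) * x^(2*n+2)"
      unfolding S_def by (simp add: algebra_simps)
    also have "\<dots> = hyp_coeff n * (2*n+4) * x^(2*n+2)" by (simp only: hyp_coeff_Suc)
    finally show ?thesis by (simp add: algebra_simps power_add power2_eq_square)
  qed
  then have "(\<lambda>n. S (Suc n)) sums (x^2 * hyp_odd' x + 3*x * hyp_odd x)"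
    using sums_add[OF sums_mult[OF hyp_odd'_sums[OF x]] sums_mult[OF hyp_odd_sums[OF x]]] by simp
  ultimately show ?thesis using sums_unique2 by fastforce
qed

text \<open>The elementary solution: u(x) (1 - x^2)^(3/2) = (x sqrt (1 - x^2) + arcsin x) / 2, since
  both sides vanish at 0 and their difference has derivative 0 by the ODE.\<close>
lemma hyp_odd_closed:
  fixes x :: real assumes x: "-1 < x" "x < 1"
  shows "hyp_odd x * sqrt (1 - x^2)^3 = (x * sqrt (1 - x^2) + arcsin x) / 2"
proof -
  define D where "D y = hyp_odd y * sqrt (1 - y^2)^3 - (y * sqrt (1 - y^2) + arcsin y) / 2" for y
  have "D x = D 0"
  proof (rule DERIV_isconst3[of "-1" 1 x 0 D])
    fix y :: real assume "y \<in> {-1<..<1}"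
    then have y: "-1 < y" "y < 1" "\<bar>y\<bar> < 1" by auto
    then have p: "0 < 1 - y^2" by (simp add: abs_less_iff power2_less_1_iff)
    define s where "s = sqrt (1 - y^2)"
    have s0: "0 < s" and s2: "s^2 = 1 - y^2" unfolding s_def using p by auto
    have ode: "hyp_odd' y = 1 + y^2 * hyp_odd' y + 3 * y * hyp_odd y" using hyp_odd_ode y by simp
    show "(D has_real_derivative 0) (at y)"
      unfolding D_def
      apply (rule DERIV_cong)
       apply (rule derivative_eq_intros refl hyp_odd_deriv DERIV_arcsin | (use y p in simp; fail))+
      unfolding s_def[symmetric] using s0 apply (simp add: field_simps)
      using s2 ode by algebra
  qed (use x in auto)
  also have "D 0 = 0"
    unfolding D_def hyp_odd_def using powser_zero[of odd_coeff] by (simp add: odd_coeff_def)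
  finally show ?thesis unfolding D_def by simp
qed

lemma hyp2F1_closed_form:
  fixes r :: real assumes r: "-1 < r" "r < 1"
  shows "hyp2F1 2 1 (3/2) (r^2) = norm_const r"
proof (cases "r = 0")
  case True
  then show ?thesis using powser_zero[of hyp_coeff]
    by (simp add: hyp2F1_def norm_const_def hyp_coeff_def[symmetric] hyp_coeff_0)
next
  case False
  define s where "s = sqrt (1 - r^2)"
  have "r^2 < 1" using r by (simp add: abs_less_iff power2_less_1_iff)
  hence s0: "0 < s" and s2: "s^2 = 1 - r^2" unfolding s_def by auto
  have "(\<lambda>n. hyp_coeff n * r^(2*n+1) / r) sums (hyp_odd r / r)"
    by (intro sums_divide hyp_odd_sums) (use r in simp)
  moreover have "hyp_coeff n * r^(2*n+1) / r = hyp_coeff n * (r^2)^n" for n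
    using False by (simp add: power_mult)
  ultimately have "(\<lambda>n. hyp_coeff n * (r^2)^n) sums (hyp_odd r / r)" by simp
  then have "hyp2F1 2 1 (3/2) (r^2) = hyp_odd r / r"
    unfolding hyp2F1_def hyp_coeff_def[symmetric] by (rule sums_unique[symmetric])
  also have "hyp_odd r = (r * s + arcsin r) / (2 * s^3)"
    using hyp_odd_closed[OF r] s0 unfolding s_def[symmetric] by (simp add: field_simps)
  also have "(r * s + arcsin r) / (2 * s^3) / r = norm_const r"
    unfolding norm_const_def s2[symmetric] s_def[symmetric] using False s0
    by (simp add: field_simps power2_eq_square power3_eq_cube)
  finally show ?thesis .
qed

theorem mainTheorem9:
  fixes r \<beta> :: real
  assumes "-1 < r" and "r < 1" and "\<beta> \<noteq> 0"
  shows "cauchy_density \<beta> * J_fun \<beta> 5 r 1 / (LINT x|lborel. cauchy_density x * J_fun x 5 r 1)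
     = (1 / hyp2F1 2 1 (3/2) (r\<^sup>2)) * (1 / (1 + \<beta>\<^sup>2)) *
       (\<bar>\<beta>\<bar> * (\<beta>\<^sup>2 - r * \<beta> + 1) / (\<beta>\<^sup>2 - 2 * r * \<beta> + 1)\<^sup>2)"
proof -
  have r: "-1 < r" "r < 1" using assms by auto
  define C where "C = t5_const * sqrt 5 * sqrt (1 - r^2)^5 / pi"
  have "r^2 < 1" using r by (simp add: abs_less_iff power2_less_1_iff)
  then have C0: "C \<noteq> 0" unfolding C_def using t5_const_pos by simp
  have numerator: "cauchy_density x * J_fun x 5 r 1 = C * (\<bar>x\<bar> * (J_kernel r x / (1 + x^2)))"
    for x unfolding cauchy_density_def J_fun_5[OF r] C_def by simp
  have denominator: "(LINT x|lborel. cauchy_density x * J_fun x 5 r 1) = C * norm_const r"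
    unfolding numerator integral_mult_right_zero integral_posterior_kernel(2)[OF r] ..
  show ?thesis
    unfolding denominator hyp2F1_closed_form[OF r] unfolding numerator J_kernel_def
    using C0 by simp
qed

end
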